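(* Fix $\gamma>0$. Let $\{\psi^t\}$ be any feasible family and $|V^0| = \max_{t\in\mathcal{T}}|V^t|$. Define the simultaneously updated potentials $$\hat\psi^t_i(l) = \psi^t_i(l) - \frac{1}{|V^0|}\Big(\nu^t_i(l) - \tfrac{1}{|\mathcal{T}(i)|}\sum_{\bar t\in\mathcal{T}(i)}\nu^{\bar t}_i(l)\Big), \qquad \forall i\in V,\ t\in\mathcal{T}(i),\ l\in\mathcal{L},$$ with all smoothed max-marginals computed from the pre-update potentials. Then $\{\hat\psi^t\}$ is feasible and $D_\gamma(\{\hat\psi^t\}) \le D_\gamma(\{\psi^t\})$.
   Context: Let $G=(V,E)$ be a finite graph and $\mathcal{L}=\{1,\dots,L\}$ a finite label set. Unary scores $\psi_i \in \mathbb{R}^{\mathcal{L}}$ ($i \in V$) and pairwise scores $\phi_{ij} \in \mathbb{R}^{\mathcal{L}\times\mathcal{L}}$ ($ij \in E$) are given. Let $\mathcal{T}$ be a finite collection of trees (sub-problems), each tree $t$ being a subgraph of $G$ with vertex set $V^t$ and edge set $E^t \subseteq E$, such that every vertex of $V$ lies in at least one tree and every edge of $E$ lies in exactly one tree. Write $\mathcal{T}(i) = \{t \in \mathcal{T} : i \in V^t\}$. Each sub-problem $t$ carries unary potentials $\psi^t_i \in \mathbb{R}^{\mathcal{L}}$ for $i \in V^t$; the family $\{\psi^t\}$ is called feasible if $\sum_{t \in \mathcal{T}(i)} \psi^t_i = \psi_i$ for every $i \in V$. For a labeling $x : V^t \to \mathcal{L}$ define the tree energy $E^t(x) = \sum_{i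 \in V^t} \psi^t_i(x_i) + \sum_{ij \in E^t} \phi_{ij}(x_i,x_j)$. For a parameter $\gamma>0$, the smoothed max-energy of sub-problem $t$ is $\nu^t = \gamma \log \sum_{x : V^t\to\mathcal{L}} \exp(E^t(x)/\gamma)$, and for $i\in V^t$, $l\in\mathcal{L}$ the smoothed max-marginal is $\nu^t_i(l) = \gamma\log\sum_{x:V^t\to\mathcal{L},\ x_i=l}\exp(E^t(x)/\gamma)$. The smoothed dual objective is $D_\gamma(\{\psi^t\}) = \sum_{t \in \mathcal{T}} \nu^t$. *)

theory Defs
  imports Complex_Main "HOL-Library.FuncSet"
begin

text \<open>Undirected edges are stored as ordered pairs (i,j); the pairwise score of edge ij is
  phi i j, a function on label pairs.\<close>

definition adj_sym :: "('v \<times> 'v) set \<Rightarrow> ('v \<times> 'v) set" where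
  "adj_sym Et = Et \<union> {(j, i) | i j. (i, j) \<in> Et}"

definition is_tree :: "'v set \<Rightarrow> ('v \<times> 'v) set \<Rightarrow> bool" where
  "is_tree Vt Et \<longleftrightarrow> finite Vt \<and> Vt \<noteq> {} \<and> Et \<subseteq> Vt \<times> Vt
     \<and> (\<forall>(i, j) \<in> Et. i \<noteq> j)
     \<and> inj_on (\<lambda>(i, j). {i, j}) Et
     \<and> card Et + 1 = card Vt
     \<and> (\<forall>i \<in> Vt. \<forall>j \<in> Vt. (i, j) \<in> (adj_sym Et)\<^sup>*)"

definition labelings :: "'v set \<Rightarrow> 'l set \<Rightarrow> ('v \<Rightarrow> 'l) set" where
  "labelings Vt Ls = Pi\<^sub>E Vt (\<lambda>_. Ls)"

definition tree_energy ::
  "'v set \<Rightarrow> ('v \<times> 'v) set \<Rightarrow> ('v \<Rightarrow> 'l \<Rightarrow> real) \<Rightarrow> ('v \<Rightarrow> 'v \<Rightarrow> 'l \<Rightarrow> 'l \<Rightarrow> real)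
   \<Rightarrow> ('v \<Rightarrow> 'l) \<Rightarrow> real" where
  "tree_energy Vt Et psit phi x =
     (\<Sum>i\<in>Vt. psit i (x i)) + (\<Sum>(i, j)\<in>Et. phi i j (x i) (x j))"

definition smooth_max_energy ::
  "real \<Rightarrow> 'l set \<Rightarrow> 'v set \<Rightarrow> ('v \<times> 'v) set \<Rightarrow> ('v \<Rightarrow> 'l \<Rightarrow> real)
   \<Rightarrow> ('v \<Rightarrow> 'v \<Rightarrow> 'l \<Rightarrow> 'l \<Rightarrow> real) \<Rightarrow> real" where
  "smooth_max_energy \<gamma> Ls Vt Et psit phi =
     \<gamma> * ln (\<Sum>x\<in>labelings Vt Ls. exp (tree_energy Vt Et psit phi x / \<gamma>))"

definition smooth_max_marginal ::
  "real \<Rightarrow> 'l set \<Rightarrow> 'v set \<Rightarrow> ('v \<times> 'v) set \<Rightarrow> ('v \<Rightarrow> 'l \<Rightarrow> real)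
   \<Rightarrow> ('v \<Rightarrow> 'v \<Rightarrow> 'l \<Rightarrow> 'l \<Rightarrow> real) \<Rightarrow> 'v \<Rightarrow> 'l \<Rightarrow> real" where
  "smooth_max_marginal \<gamma> Ls Vt Et psit phi i l =
     \<gamma> * ln (\<Sum>x\<in>{x \<in> labelings Vt Ls. x i = l}. exp (tree_energy Vt Et psit phi x / \<gamma>))"

definition trees_at :: "'t set \<Rightarrow> ('t \<Rightarrow> 'v set) \<Rightarrow> 'v \<Rightarrow> 't set" where
  "trees_at T Vt i = {t \<in> T. i \<in> Vt t}"

definition feasible ::
  "'v set \<Rightarrow> 'l set \<Rightarrow> 't set \<Rightarrow> ('t \<Rightarrow> 'v set) \<Rightarrow> ('v \<Rightarrow> 'l \<Rightarrow> real)
   \<Rightarrow> ('t \<Rightarrow> 'v \<Rightarrow> 'l \<Rightarrow> real) \<Rightarrow> bool" where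
  "feasible V Ls T Vt psi psiT \<longleftrightarrow>
     (\<forall>i\<in>V. \<forall>l\<in>Ls. (\<Sum>t\<in>trees_at T Vt i. psiT t i l) = psi i l)"

definition smooth_dual ::
  "real \<Rightarrow> 'l set \<Rightarrow> 't set \<Rightarrow> ('t \<Rightarrow> 'v set) \<Rightarrow> ('t \<Rightarrow> ('v \<times> 'v) set)
   \<Rightarrow> ('v \<Rightarrow> 'v \<Rightarrow> 'l \<Rightarrow> 'l \<Rightarrow> real) \<Rightarrow> ('t \<Rightarrow> 'v \<Rightarrow> 'l \<Rightarrow> real) \<Rightarrow> real" where
  "smooth_dual \<gamma> Ls T Vt Et phi psiT =
     (\<Sum>t\<in>T. smooth_max_energy \<gamma> Ls (Vt t) (Et t) (psiT t) phi)"

end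

theory Submission imports Defs "HOL-Analysis.Convex" begin

text \<open>Both the max-energy and the max-marginals are smoothed maxima of the tree energy.
  The update rewrites the energy of the new potentials of a tree t as a convex combination:
  weight 1 - |V^t|/|V^0| on the old energy, and weight 1/|V^0| on each of the energies
  E - \<nu>^t_i(x_i) + \<mu>_i(x_i), i \<in> V^t, where \<mu>_i is the mean of the \<nu>^t_i over T(i).
  By convexity of the smoothed maximum, the new \<nu>^t is at most the same combination of the
  smoothed maxima, and the smoothed maximum of E - \<nu>^t_i(x_i) + \<mu>_i(x_i) collapses to the
  smoothed maximum of \<mu>_i over the labels. Convexity once more bounds the latter by the mean
  of the \<nu>^t over T(i); summing over all trees and exchanging the order of summation, the
  terms |V^t| \<nu>^t cancel.\<close>

definition smooth_max :: "real \<Rightarrow> 'a set \<Rightarrow> ('a \<Rightarrow> real) \<Rightarrow> real" where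
  "smooth_max \<gamma> X f = \<gamma> * ln (\<Sum>x\<in>X. exp (f x / \<gamma>))"

lemma smooth_max_energy_eq_smooth_max:
  "smooth_max_energy \<gamma> Ls Vt Et psit phi = smooth_max \<gamma> (labelings Vt Ls) (tree_energy Vt Et psit phi)"
  by (simp add: smooth_max_energy_def smooth_max_def)

lemma smooth_max_marginal_eq_smooth_max:
  "smooth_max_marginal \<gamma> Ls Vt Et psit phi i l
     = smooth_max \<gamma> {x \<in> labelings Vt Ls. x i = l} (tree_energy Vt Et psit phi)"
  by (simp add: smooth_max_marginal_def smooth_max_def)

lemma smooth_max_cong:
  "(\<And>x. x \<in> X \<Longrightarrow> f x = g x) \<Longrightarrow> smooth_max \<gamma> X f = smooth_max \<gamma> X g"
  by (simp add: smooth_max_def)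

lemma exp_smooth_max:
  assumes "finite X" "X \<noteq> {}" "\<gamma> \<noteq> 0"
  shows "exp (smooth_max \<gamma> X f / \<gamma>) = (\<Sum>x\<in>X. exp (f x / \<gamma>))"
proof -
  have "(\<Sum>x\<in>X. exp (f x / \<gamma>)) > 0"
    using assms by (intro sum_pos) auto
  then show ?thesis
    using assms by (simp add: smooth_max_def)
qed

lemma ln_sum_exp_convex:
  fixes f :: "'k \<Rightarrow> 'a \<Rightarrow> real"
  assumes X: "finite X" "X \<noteq> {}" and K: "finite K"
    and w: "\<forall>k\<in>K. w k \<ge> 0" "sum w K = 1"
  shows "ln (\<Sum>x\<in>X. exp (\<Sum>k\<in>K. w k * f k x)) \<le> (\<Sum>k\<in>K. w k * ln (\<Sum>x\<in>X. exp (f k x)))"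
proof -
  define c where "c k = ln (\<Sum>x\<in>X. exp (f k x))" for k
  define g where "g k x = f k x - c k" for k x
  have pos: "(\<Sum>x\<in>X. exp (h x)) > 0" for h :: "'a \<Rightarrow> real"
    using X by (intro sum_pos) auto
  have sum_exp_g: "(\<Sum>x\<in>X. exp (g k x)) = 1" for k
    using pos[of "f k"] by (simp add: g_def c_def exp_diff flip: sum_divide_distrib)
  have "K \<noteq> {}"
    using w(2) by auto
  then have jensen: "exp (\<Sum>k\<in>K. w k * g k x) \<le> (\<Sum>k\<in>K. w k * exp (g k x))" for x
    using convex_on_sum[OF K _ exp_convex w(2), of "\<lambda>k. g k x"] w by auto
  have "(\<Sum>x\<in>X. exp (\<Sum>k\<in>K. w k * g k x)) \<le> (\<Sum>x\<in>X. \<Sum>k\<in>K. w k * exp (g k x))"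
    by (rule sum_mono) (rule jensen)
  also have "\<dots> = (\<Sum>k\<in>K. w k * (\<Sum>x\<in>X. exp (g k x)))"
    by (subst sum.swap) (simp add: sum_distrib_left)
  also have "\<dots> = 1"
    using sum_exp_g w(2) by simp
  finally have le1: "(\<Sum>x\<in>X. exp (\<Sum>k\<in>K. w k * g k x)) \<le> 1" .
  have "(\<Sum>k\<in>K. w k * f k x) = (\<Sum>k\<in>K. w k * g k x) + (\<Sum>k\<in>K. w k * c k)" for x
    by (simp add: g_def algebra_simps sum.distrib sum_subtractf)
  then have "(\<Sum>x\<in>X. exp (\<Sum>k\<in>K. w k * f k x))
      = exp (\<Sum>k\<in>K. w k * c k) * (\<Sum>x\<in>X. exp (\<Sum>k\<in>K. w k * g k x))"
    by (simp add: exp_add sum_distrib_left mult.commute)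
  then have "ln (\<Sum>x\<in>X. exp (\<Sum>k\<in>K. w k * f k x))
      = (\<Sum>k\<in>K. w k * c k) + ln (\<Sum>x\<in>X. exp (\<Sum>k\<in>K. w k * g k x))"
    using pos[of "\<lambda>x. \<Sum>k\<in>K. w k * g k x"] by (simp add: ln_mult)
  also have "\<dots> \<le> (\<Sum>k\<in>K. w k * c k)"
    using le1 pos[of "\<lambda>x. \<Sum>k\<in>K. w k * g k x"] by simp
  finally show ?thesis
    by (simp add: c_def)
qed

lemma smooth_max_convex:
  assumes "finite X" "X \<noteq> {}" "finite K" "\<forall>k\<in>K. w k \<ge> 0" "sum w K = 1" "\<gamma> > 0"
  shows "smooth_max \<gamma> X (\<lambda>x. \<Sum>k\<in>K. w k * f k x) \<le> (\<Sum>k\<in>K. w k * smooth_max \<gamma> X (f k))"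
proof -
  have "ln (\<Sum>x\<in>X. exp (\<Sum>k\<in>K. w k * (f k x / \<gamma>))) \<le> (\<Sum>k\<in>K. w k * ln (\<Sum>x\<in>X. exp (f k x / \<gamma>)))"
    by (rule ln_sum_exp_convex) (use assms in auto)
  then have "\<gamma> * ln (\<Sum>x\<in>X. exp (\<Sum>k\<in>K. w k * (f k x / \<gamma>)))
      \<le> \<gamma> * (\<Sum>k\<in>K. w k * ln (\<Sum>x\<in>X. exp (f k x / \<gamma>)))"
    using \<open>\<gamma> > 0\<close> by simp
  then show ?thesis
    by (simp add: smooth_max_def sum_divide_distrib sum_distrib_left mult.left_commute)
qed

lemma smooth_max_mean_le:
  assumes "finite Y" "Y \<noteq> {}" "finite K" "K \<noteq> {}" "\<gamma> > 0"
  shows "smooth_max \<gamma> Y (\<lambda>y. 1 / real (card K) * (\<Sum>k\<in>K. f k y))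
    \<le> 1 / real (card K) * (\<Sum>k\<in>K. smooth_max \<gamma> Y (f k))"
  using smooth_max_convex[OF assms(1,2,3), of "\<lambda>_. 1 / real (card K)" \<gamma> f] assms
  by (simp add: sum_distrib_left)

lemma smooth_max_fibers:
  assumes "finite X" "g ` X = Y" "\<gamma> \<noteq> 0"
  shows "smooth_max \<gamma> Y (\<lambda>y. smooth_max \<gamma> {x\<in>X. g x = y} f) = smooth_max \<gamma> X f"
proof -
  have "(\<Sum>y\<in>Y. exp (smooth_max \<gamma> {x\<in>X. g x = y} f / \<gamma>))
      = (\<Sum>y\<in>Y. \<Sum>x\<in>{x\<in>X. g x = y}. exp (f x / \<gamma>))"
    using assms by (intro sum.cong refl exp_smooth_max) auto
  also have "\<dots> = (\<Sum>x\<in>X. exp (f x / \<gamma>))"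
    using assms by (intro sum.group) auto
  finally show ?thesis
    by (simp add: smooth_max_def)
qed

lemma smooth_max_recentre_fibers:
  assumes "finite X" "g ` X = Y" "\<gamma> \<noteq> 0"
  shows "smooth_max \<gamma> X (\<lambda>x. f x - smooth_max \<gamma> {x'\<in>X. g x' = g x} f + c (g x))
    = smooth_max \<gamma> Y c"
proof -
  define M where "M y = smooth_max \<gamma> {x\<in>X. g x = y} f" for y
  define h where "h y x = exp ((c y - M y) / \<gamma>) * exp (f x / \<gamma>)" for y x
  have exp_M: "exp (M y / \<gamma>) = (\<Sum>x\<in>{x\<in>X. g x = y}. exp (f x / \<gamma>))" if "y \<in> Y" for y
    unfolding M_def using that assms by (intro exp_smooth_max) auto
  have "(\<Sum>x\<in>X. exp ((f x - M (g x) + c (g x)) / \<gamma>)) = (\<Sum>x\<in>X. h (g x) x)"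
    by (simp add: h_def add_divide_distrib diff_divide_distrib exp_add exp_diff mult.commute)
  also have "\<dots> = (\<Sum>y\<in>Y. \<Sum>x\<in>{x\<in>X. g x = y}. h (g x) x)"
    by (rule sum.group[symmetric]) (use assms in auto)
  also have "\<dots> = (\<Sum>y\<in>Y. \<Sum>x\<in>{x\<in>X. g x = y}. h y x)"
    by (intro sum.cong refl) auto
  also have "\<dots> = (\<Sum>y\<in>Y. exp ((c y - M y) / \<gamma>) * exp (M y / \<gamma>))"
    by (intro sum.cong refl) (simp add: h_def exp_M sum_distrib_left)
  also have "\<dots> = (\<Sum>y\<in>Y. exp (c y / \<gamma>))"
    by (simp add: diff_divide_distrib exp_diff)
  finally show ?thesis
    by (simp add: smooth_max_def M_def)
qed

lemma finite_labelings: "finite Vt \<Longrightarrow> finite Ls \<Longrightarrow> finite (labelings Vt Ls)"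
  by (simp add: labelings_def finite_PiE)

lemma labelings_nonempty: "Ls \<noteq> {} \<Longrightarrow> labelings Vt Ls \<noteq> {}"
  by (simp add: labelings_def PiE_eq_empty_iff)

lemma image_labelings_eval:
  assumes "i \<in> Vt"
  shows "(\<lambda>x. x i) ` labelings Vt Ls = Ls"
proof
  show "(\<lambda>x. x i) ` labelings Vt Ls \<subseteq> Ls"
    using assms by (auto simp: labelings_def)
  show "Ls \<subseteq> (\<lambda>x. x i) ` labelings Vt Ls"
  proof
    fix l assume "l \<in> Ls"
    then have x: "restrict (\<lambda>_. l) Vt \<in> labelings Vt Ls"
      by (simp add: labelings_def)
    have "l = restrict (\<lambda>_. l) Vt i"
      using assms by simp
    then show "l \<in> (\<lambda>x. x i) ` labelings Vt Ls"
      using x by (rule image_eqI)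
  qed
qed

lemma smooth_max_of_marginals:
  assumes "finite Vt" "finite Ls" "i \<in> Vt" "\<gamma> \<noteq> 0"
  shows "smooth_max \<gamma> Ls (smooth_max_marginal \<gamma> Ls Vt Et psit phi i)
    = smooth_max_energy \<gamma> Ls Vt Et psit phi"
  unfolding smooth_max_marginal_eq_smooth_max smooth_max_energy_eq_smooth_max
  using smooth_max_fibers[of "labelings Vt Ls" "\<lambda>x. x i" Ls \<gamma>] assms
  by (simp add: finite_labelings image_labelings_eval)

lemma smooth_max_energy_marginal_update_le:
  fixes Vt :: "'v set" and N :: real
  assumes fin: "finite Vt" "finite Ls" "Ls \<noteq> {}" and \<gamma>: "\<gamma> > 0"
    and N: "real (card Vt) \<le> N" "0 < N"
    and upd: "\<forall>i\<in>Vt. \<forall>l\<in>Ls. psit' i l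
      = psit i l - 1 / N * (smooth_max_marginal \<gamma> Ls Vt Et psit phi i l - c i l)"
  shows "smooth_max_energy \<gamma> Ls Vt Et psit' phi
    \<le> (1 - real (card Vt) / N) * smooth_max_energy \<gamma> Ls Vt Et psit phi
      + 1 / N * (\<Sum>i\<in>Vt. smooth_max \<gamma> Ls (c i))"
proof -
  define X where "X = labelings Vt Ls"
  define E where "E = tree_energy Vt Et psit phi"
  define F where "F i x = E x - smooth_max \<gamma> {y\<in>X. y i = x i} E + c i (x i)" for i x
  \<comment> \<open>Index set of the convex combination: None for the old energy, Some i for vertex i.\<close>
  define K where "K = insert None (Some ` Vt)"
  define w where "w (k :: 'v option) = (case k of None \<Rightarrow> 1 - real (card Vt) / N | Some i \<Rightarrow> 1 / N)" for k
  define f where "f k = (case k of None \<Rightarrow> E | Some i \<Rightarrow> F i)" for k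
  have sum_K: "sum h K = h None + (\<Sum>i\<in>Vt. h (Some i))" for h :: "'v option \<Rightarrow> real"
    unfolding K_def using fin(1) by (simp add: sum.reindex)
  have energy: "tree_energy Vt Et psit' phi x = (\<Sum>k\<in>K. w k * f k x)" if "x \<in> X" for x
  proof -
    have "(\<Sum>i\<in>Vt. psit' i (x i))
        = (\<Sum>i\<in>Vt. psit i (x i) - 1 / N * (smooth_max \<gamma> {y\<in>X. y i = x i} E - c i (x i)))"
      using that upd by (intro sum.cong refl)
        (auto simp: X_def E_def labelings_def smooth_max_marginal_eq_smooth_max)
    then have "tree_energy Vt Et psit' phi x
        = E x - 1 / N * (\<Sum>i\<in>Vt. smooth_max \<gamma> {y\<in>X. y i = x i} E - c i (x i))"
      by (simp add: E_def tree_energy_def sum_subtractf sum_distrib_left flip: sum_divide_distrib)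
    also have "\<dots> = (1 - real (card Vt) / N) * E x + 1 / N * (\<Sum>i\<in>Vt. F i x)"
      using N by (simp add: F_def sum_subtractf sum.distrib field_simps)
    finally show ?thesis
      by (simp add: sum_K w_def f_def sum_distrib_left)
  qed
  have F_max: "smooth_max \<gamma> X (F i) = smooth_max \<gamma> Ls (c i)" if "i \<in> Vt" for i
    unfolding F_def X_def
    using smooth_max_recentre_fibers[of "labelings Vt Ls" "\<lambda>x. x i" Ls \<gamma> E "c i"] that fin \<gamma>
    by (simp add: finite_labelings image_labelings_eval)
  have "smooth_max_energy \<gamma> Ls Vt Et psit' phi = smooth_max \<gamma> X (\<lambda>x. \<Sum>k\<in>K. w k * f k x)"
    unfolding smooth_max_energy_eq_smooth_max X_def by (rule smooth_max_cong) (simp add: energy X_def)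
  also have "\<dots> \<le> (\<Sum>k\<in>K. w k * smooth_max \<gamma> X (f k))"
  proof (rule smooth_max_convex)
    show "\<forall>k\<in>K. w k \<ge> 0"
      using N by (auto simp: K_def w_def field_simps)
    show "sum w K = 1"
      by (simp add: sum_K w_def)
  qed (use fin \<gamma> in \<open>simp_all add: X_def K_def finite_labelings labelings_nonempty\<close>)
  also have "\<dots> = (1 - real (card Vt) / N) * smooth_max_energy \<gamma> Ls Vt Et psit phi
      + 1 / N * (\<Sum>i\<in>Vt. smooth_max \<gamma> Ls (c i))"
  proof -
    have "smooth_max \<gamma> X E = smooth_max_energy \<gamma> Ls Vt Et psit phi"
      by (simp add: X_def E_def smooth_max_energy_eq_smooth_max)
    moreover have "(\<Sum>i\<in>Vt. smooth_max \<gamma> X (F i)) = (\<Sum>i\<in>Vt. smooth_max \<gamma> Ls (c i))"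
      using F_max by simp
    ultimately show ?thesis
      by (simp add: sum_K w_def f_def flip: sum_distrib_left sum_divide_distrib)
  qed
  finally show ?thesis .
qed

lemma sum_deviation_from_mean: "(\<Sum>k\<in>K. f k - 1 / real (card K) * (\<Sum>k\<in>K. f k)) = (0::real)"
  by (cases "finite K \<and> K \<noteq> {}") (auto simp: sum_subtractf)

lemma feasible_mean_correction:
  assumes feas: "feasible V Ls T Vt psi psiT"
    and upd: "\<forall>i\<in>V. \<forall>t\<in>trees_at T Vt i. \<forall>l\<in>Ls. psiT' t i l = psiT t i l
      - a * (m t i l - 1 / real (card (trees_at T Vt i)) * (\<Sum>s\<in>trees_at T Vt i. m s i l))"
  shows "feasible V Ls T Vt psi psiT'"
  unfolding feasible_def
proof (intro ballI)
  fix i l assume i: "i \<in> V" and l: "l \<in> Ls"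
  let ?K = "trees_at T Vt i"
  define d where "d t = m t i l - 1 / real (card ?K) * (\<Sum>s\<in>?K. m s i l)" for t
  have "(\<Sum>t\<in>?K. psiT' t i l) = (\<Sum>t\<in>?K. psiT t i l - a * d t)"
    using upd i l by (intro sum.cong) (auto simp: d_def)
  also have "\<dots> = (\<Sum>t\<in>?K. psiT t i l) - a * (\<Sum>t\<in>?K. d t)"
    by (simp add: sum_subtractf sum_distrib_left)
  also have "\<dots> = psi i l"
    using feas i l unfolding d_def sum_deviation_from_mean by (simp add: feasible_def)
  finally show "(\<Sum>t\<in>?K. psiT' t i l) = psi i l" .
qed

lemma sum_trees_at_swap:
  assumes "finite T" "finite V" "\<forall>t\<in>T. Vt t \<subseteq> V"
  shows "(\<Sum>t\<in>T. \<Sum>i\<in>Vt t. g t i) = (\<Sum>i\<in>V. \<Sum>t\<in>trees_at T Vt i. g t i)"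
proof -
  have "(\<Sum>t\<in>T. \<Sum>i\<in>Vt t. g t i) = (\<Sum>t\<in>T. \<Sum>i\<in>{i\<in>V. i \<in> Vt t}. g t i)"
    using assms(3) by (intro sum.cong refl arg_cong2[where f = sum]) auto
  also have "\<dots> = (\<Sum>i\<in>V. \<Sum>t\<in>{t\<in>T. i \<in> Vt t}. g t i)"
    using assms(1,2) by (rule sum.swap_restrict)
  finally show ?thesis
    by (simp add: trees_at_def)
qed

lemma smooth_dual_mean_update_le:
  fixes N :: real
  assumes finV: "finite V" and finL: "finite Ls" "Ls \<noteq> {}" and finT: "finite T"
    and Vt: "\<forall>t\<in>T. Vt t \<subseteq> V" and N: "\<forall>t\<in>T. real (card (Vt t)) \<le> N" "0 < N"
    and \<gamma>: "\<gamma> > 0"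
    and upd: "\<forall>i\<in>V. \<forall>t\<in>trees_at T Vt i. \<forall>l\<in>Ls. psiT' t i l = psiT t i l
      - 1 / N * (smooth_max_marginal \<gamma> Ls (Vt t) (Et t) (psiT t) phi i l
        - 1 / real (card (trees_at T Vt i))
          * (\<Sum>s\<in>trees_at T Vt i. smooth_max_marginal \<gamma> Ls (Vt s) (Et s) (psiT s) phi i l))"
  shows "smooth_dual \<gamma> Ls T Vt Et phi psiT' \<le> smooth_dual \<gamma> Ls T Vt Et phi psiT"
proof -
  define \<nu> where "\<nu> t = smooth_max_energy \<gamma> Ls (Vt t) (Et t) (psiT t) phi" for t
  define \<mu> where "\<mu> i l = 1 / real (card (trees_at T Vt i))
    * (\<Sum>s\<in>trees_at T Vt i. smooth_max_marginal \<gamma> Ls (Vt s) (Et s) (psiT s) phi i l)" for i l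
  define A where "A i = smooth_max \<gamma> Ls (\<mu> i)" for i
  define n where "n t = real (card (Vt t))" for t
  have finVt: "finite (Vt t)" if "t \<in> T" for t
    using Vt finV that finite_subset by blast
  have tree: "smooth_max_energy \<gamma> Ls (Vt t) (Et t) (psiT' t) phi
      \<le> (1 - n t / N) * \<nu> t + 1 / N * (\<Sum>i\<in>Vt t. A i)" if t: "t \<in> T" for t
  proof -
    have "\<forall>i\<in>Vt t. \<forall>l\<in>Ls. psiT' t i l
        = psiT t i l - 1 / N * (smooth_max_marginal \<gamma> Ls (Vt t) (Et t) (psiT t) phi i l - \<mu> i l)"
      using t Vt upd unfolding \<mu>_def trees_at_def by blast
    then show ?thesis
      unfolding \<nu>_def A_def n_def
      using finVt[OF t] finL \<gamma> N t by (intro smooth_max_energy_marginal_update_le) auto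
  qed
  have vertex: "real (card (trees_at T Vt i)) * A i \<le> (\<Sum>t\<in>trees_at T Vt i. \<nu> t)"
    if i: "i \<in> V" for i
  proof (cases "trees_at T Vt i = {}")
    case False
    let ?K = "trees_at T Vt i"
    have finK: "finite ?K"
      using finT by (simp add: trees_at_def)
    have "A i \<le> 1 / real (card ?K)
        * (\<Sum>t\<in>?K. smooth_max \<gamma> Ls (smooth_max_marginal \<gamma> Ls (Vt t) (Et t) (psiT t) phi i))"
      unfolding A_def \<mu>_def by (rule smooth_max_mean_le) (use finL finK False \<gamma> in auto)
    also have "\<dots> = 1 / real (card ?K) * (\<Sum>t\<in>?K. \<nu> t)"
      using finVt finL \<gamma> by (auto simp: \<nu>_def trees_at_def smooth_max_of_marginals intro!: sum.cong)
    finally show ?thesis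
      using finK False by (simp add: field_simps card_gt_0_iff)
  qed simp
  have "smooth_dual \<gamma> Ls T Vt Et phi psiT' \<le> (\<Sum>t\<in>T. (1 - n t / N) * \<nu> t + 1 / N * (\<Sum>i\<in>Vt t. A i))"
    unfolding smooth_dual_def by (rule sum_mono) (rule tree)
  also have "\<dots> = (\<Sum>t\<in>T. \<nu> t) - 1 / N * (\<Sum>t\<in>T. n t * \<nu> t)
      + 1 / N * (\<Sum>t\<in>T. \<Sum>i\<in>Vt t. A i)"
    by (simp add: sum.distrib sum_subtractf left_diff_distrib sum_distrib_left)
  also have "(\<Sum>t\<in>T. \<Sum>i\<in>Vt t. A i) = (\<Sum>i\<in>V. real (card (trees_at T Vt i)) * A i)"
    using sum_trees_at_swap[OF finT finV Vt, of "\<lambda>t i. A i"] by simp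
  also have "\<dots> \<le> (\<Sum>i\<in>V. \<Sum>t\<in>trees_at T Vt i. \<nu> t)"
    using vertex by (rule sum_mono)
  also have "\<dots> = (\<Sum>t\<in>T. n t * \<nu> t)"
    using sum_trees_at_swap[OF finT finV Vt, of "\<lambda>t i. \<nu> t"] by (simp add: n_def)
  finally show ?thesis
    using N(2) by (simp add: smooth_dual_def \<nu>_def divide_right_mono)
qed

theorem theorem2:
  fixes V :: "'v set" and E :: "('v \<times> 'v) set" and Ls :: "'l set"
    and T :: "'t set" and Vt :: "'t \<Rightarrow> 'v set" and Et :: "'t \<Rightarrow> ('v \<times> 'v) set"
    and psi :: "'v \<Rightarrow> 'l \<Rightarrow> real" and phi :: "'v \<Rightarrow> 'v \<Rightarrow> 'l \<Rightarrow> 'l \<Rightarrow> real"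
    and psiT psiT_hat :: "'t \<Rightarrow> 'v \<Rightarrow> 'l \<Rightarrow> real" and \<gamma> :: real
  assumes finV: "finite V" and E_sub: "E \<subseteq> V \<times> V"
    and finL: "finite Ls" and neL: "Ls \<noteq> {}"
    and finT: "finite T"
    and trees: "\<forall>t\<in>T. is_tree (Vt t) (Et t) \<and> Vt t \<subseteq> V \<and> Et t \<subseteq> E"
    and cover_V: "\<forall>i\<in>V. \<exists>t\<in>T. i \<in> Vt t"
    and cover_E: "\<forall>e\<in>E. \<exists>!t. t \<in> T \<and> e \<in> Et t"
    and gamma_pos: "\<gamma> > 0"
    and feas: "feasible V Ls T Vt psi psiT"
    and upd: "\<forall>i\<in>V. \<forall>t\<in>trees_at T Vt i. \<forall>l\<in>Ls.
       psiT_hat t i l = psiT t i l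
         - 1 / real (Max ((\<lambda>t. card (Vt t)) ` T))
           * (smooth_max_marginal \<gamma> Ls (Vt t) (Et t) (psiT t) phi i l
              - 1 / real (card (trees_at T Vt i))
                * (\<Sum>tb\<in>trees_at T Vt i. smooth_max_marginal \<gamma> Ls (Vt tb) (Et tb) (psiT tb) phi i l))"
  shows "feasible V Ls T Vt psi psiT_hat
    \<and> smooth_dual \<gamma> Ls T Vt Et phi psiT_hat \<le> smooth_dual \<gamma> Ls T Vt Et phi psiT"
proof -
  have "smooth_dual \<gamma> Ls T Vt Et phi psiT_hat \<le> smooth_dual \<gamma> Ls T Vt Et phi psiT"
  proof (cases "T = {}")
    case True
    then show ?thesis
      by (simp add: smooth_dual_def)
  next
    case False
    define N where "N = real (Max ((\<lambda>t. card (Vt t)) ` T))"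
    have card_le: "\<forall>t\<in>T. real (card (Vt t)) \<le> N"
      using finT by (auto simp: N_def intro: Max_ge)
    obtain t where "t \<in> T"
      using False by blast
    then have "0 < card (Vt t)"
      using trees by (auto simp: is_tree_def card_gt_0_iff)
    then have "0 < N"
      using card_le \<open>t \<in> T\<close> by (meson of_nat_0_less_iff less_le_trans)
    then show ?thesis
      using trees upd[folded N_def]
      by (intro smooth_dual_mean_update_le[OF finV finL neL finT _ card_le]) (auto simp: gamma_pos)
  qed
  moreover have "feasible V Ls T Vt psi psiT_hat"
    using feas upd by (rule feasible_mean_correction)
  ultimately show ?thesis
    by blast
qed

end
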